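(* Let $G$ be the corresponding graph of an array $A$ with reach one, let $F$ be a resulting DFS forest of $G$, and let $T$ be any component of $F$. Then the root of $T$ has at most two outgoing arcs, every leaf of $T$ has at most one incoming arc, and every internal vertex of $T$ has exactly one incoming and exactly one outgoing arc.
   Context: An array is a finite sequence $A=(A[1],\dots,A[n])$ of pairwise distinct real numbers. The corresponding graph of $A$ with reach one is the directed graph on $\{1,\dots,n\}$ with an arc $(i,j)$ whenever $j\equiv i\pm1\pmod n$, $j\ne i$, and $A[i]<A[j]$ (indices cyclic). The resulting DFS forest of a directed graph is the spanning subgraph consisting of exactly the arcs $(\mathrm{parent}(w),w)$ along which depth-first search discovers new vertices; components are connected components of the underlying undirected graph, and each is a rooted tree whose root is the vertex with no incoming arc. A leaf of a rooted tree is an end-vertex (degree-one vertex) of the tree; an internal vertex is a vertex that is neither the root nor a leaf. *)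

theory Defs
  imports Complex_Main
begin

definition reach_one_graph :: "nat \<Rightarrow> (nat \<Rightarrow> real) \<Rightarrow> (nat \<times> nat) set" where
  "reach_one_graph n A = {(i, j). i \<in> {1..n} \<and> j \<in> {1..n} \<and> j \<noteq> i \<and>
      (j mod n = (i + 1) mod n \<or> (j + 1) mod n = i mod n) \<and> A i < A j}"

text \<open>States of a depth-first search on digraph (V,E):
  (visited vertices, stack of active vertices, tree arcs discovered so far).\<close>
inductive dfs_state :: "'a set \<Rightarrow> ('a \<times> 'a) set \<Rightarrow> 'a set \<Rightarrow> 'a list \<Rightarrow> ('a \<times> 'a) set \<Rightarrow> bool"
  for V :: "'a set" and E :: "('a \<times> 'a) set" where
  init: "dfs_state V E {} [] {}"
| new_root: "dfs_state V E vis [] T \<Longrightarrow> v \<in> V \<Longrightarrow> v \<notin> vis \<Longrightarrow>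
      dfs_state V E (insert v vis) [v] T"
| discover: "dfs_state V E vis (u # s) T \<Longrightarrow> (u, w) \<in> E \<Longrightarrow> w \<notin> vis \<Longrightarrow>
      dfs_state V E (insert w vis) (w # u # s) (insert (u, w) T)"
| backtrack: "dfs_state V E vis (u # s) T \<Longrightarrow> (\<forall>w. (u, w) \<in> E \<longrightarrow> w \<in> vis) \<Longrightarrow>
      dfs_state V E vis s T"

definition dfs_forest :: "'a set \<Rightarrow> ('a \<times> 'a) set \<Rightarrow> ('a \<times> 'a) set \<Rightarrow> bool" where
  "dfs_forest V E F \<longleftrightarrow> dfs_state V E V [] F"

definition components :: "'a set \<Rightarrow> ('a \<times> 'a) set \<Rightarrow> 'a set set" where
  "components V F = {{w \<in> V. (v, w) \<in> (F \<union> F\<inverse>)\<^sup>*} | v. v \<in> V}"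

definition comp_arcs :: "('a \<times> 'a) set \<Rightarrow> 'a set \<Rightarrow> ('a \<times> 'a) set" where
  "comp_arcs F C = F \<inter> (C \<times> C)"

definition out_deg :: "('a \<times> 'a) set \<Rightarrow> 'a \<Rightarrow> nat" where
  "out_deg R v = card {w. (v, w) \<in> R}"

definition in_deg :: "('a \<times> 'a) set \<Rightarrow> 'a \<Rightarrow> nat" where
  "in_deg R v = card {u. (u, v) \<in> R}"

definition is_root :: "('a \<times> 'a) set \<Rightarrow> 'a set \<Rightarrow> 'a \<Rightarrow> bool" where
  "is_root R C v \<longleftrightarrow> v \<in> C \<and> (\<forall>u. (u, v) \<notin> R)"

definition is_leaf :: "('a \<times> 'a) set \<Rightarrow> 'a set \<Rightarrow> 'a \<Rightarrow> bool" where
  "is_leaf R C v \<longleftrightarrow> v \<in> C \<and> card {u. (u, v) \<in> R \<or> (v, u) \<in> R} = 1"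

definition is_internal :: "('a \<times> 'a) set \<Rightarrow> 'a set \<Rightarrow> 'a \<Rightarrow> bool" where
  "is_internal R C v \<longleftrightarrow> v \<in> C \<and> \<not> is_root R C v \<and> \<not> is_leaf R C v"

end

theory Submission
  imports Defs
begin

text \<open>In a reach-one graph every vertex has at most two out-neighbours, namely among its two
  cyclic neighbours, and in a DFS forest every vertex has at most one parent. An internal vertex
  v has a parent p, a cyclic neighbour with A p < A v; hence the arc from v back to p is absent
  and at most one out-arc remains, while at least one remains because v is not a leaf.\<close>

lemma inj_on_mod_interval: "inj_on (\<lambda>j. j mod n) {m..<m + n}" for m n :: nat
proof (rule inj_onI)
  have eq_if_le: "a = b" if "a \<le> b" "a \<in> {m..<m + n}" "b \<in> {m..<m + n}" "a mod n = b mod n"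
    for a b :: nat
  proof -
    have "n dvd b - a" using mod_eq_dvd_iff_nat[OF \<open>a \<le> b\<close>, of n] that(4) by argo
    moreover have "b - a < n" using that(2,3) by auto
    ultimately show ?thesis using \<open>a \<le> b\<close> nat_dvd_not_less[of "b - a" n] by linarith
  qed
  fix a b assume "a \<in> {m..<m + n}" "b \<in> {m..<m + n}" "a mod n = b mod n"
  then show "a = b" using eq_if_le[of a b] eq_if_le[of b a] by linarith
qed

lemma card_fiber_le_1:
  assumes "inj_on f S"
  shows "card {x \<in> S. f x = c} \<le> 1"
proof (cases "finite {x \<in> S. f x = c}")
  case True
  then show ?thesis using assms by (auto simp: card_le_Suc0_iff_eq inj_on_def)
qed simp

definition cyclic_nbrs :: "nat \<Rightarrow> nat \<Rightarrow> nat set" where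
  "cyclic_nbrs n i = {j \<in> {1..n}. j \<noteq> i \<and> (j mod n = (i + 1) mod n \<or> (j + 1) mod n = i mod n)}"

lemma cyclic_nbrs_sym: "i \<in> {1..n} \<Longrightarrow> j \<in> cyclic_nbrs n i \<Longrightarrow> i \<in> cyclic_nbrs n j"
  unfolding cyclic_nbrs_def by auto

lemma finite_cyclic_nbrs: "finite (cyclic_nbrs n i)"
  unfolding cyclic_nbrs_def by simp

lemma card_cyclic_nbrs_le_2: "card (cyclic_nbrs n i) \<le> 2"
proof -
  let ?succ = "{j \<in> {1..n}. j mod n = (i + 1) mod n}"
  let ?pred = "{j \<in> {1..n}. (j + 1) mod n = i mod n}"
  have "inj_on (\<lambda>j. j mod n) {1..n}"
    using inj_on_mod_interval[of n 1] by (simp add: atLeastLessThanSuc_atLeastAtMost)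
  then have succ: "card ?succ \<le> 1" by (rule card_fiber_le_1)
  have "inj_on (\<lambda>j. j mod n) (Suc ` {1..n})"
    using inj_on_mod_interval[of n 2] by (simp add: atLeastLessThanSuc_atLeastAtMost numeral_2_eq_2)
  then have "inj_on (\<lambda>j. (j + 1) mod n) {1..n}"
    using comp_inj_on[of Suc "{1..n}" "\<lambda>j. j mod n"] by (simp add: o_def)
  then have pred: "card ?pred \<le> 1" by (rule card_fiber_le_1)
  have "card (cyclic_nbrs n i) \<le> card (?succ \<union> ?pred)"
    by (rule card_mono) (auto simp: cyclic_nbrs_def)
  also have "\<dots> \<le> card ?succ + card ?pred" by (rule card_Un_le)
  finally show ?thesis using succ pred by linarith
qed

lemma mem_reach_one_graph_iff:
  "(i, j) \<in> reach_one_graph n A \<longleftrightarrow> i \<in> {1..n} \<and> j \<in> cyclic_nbrs n i \<and> A i < A j"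
  unfolding reach_one_graph_def cyclic_nbrs_def by auto

lemma out_nbrs_subset_cyclic_nbrs:
  "R \<subseteq> reach_one_graph n A \<Longrightarrow> {w. (v, w) \<in> R} \<subseteq> cyclic_nbrs n v"
  by (auto simp: mem_reach_one_graph_iff)

lemma out_deg_le_2:
  assumes "R \<subseteq> reach_one_graph n A"
  shows "out_deg R v \<le> 2"
  unfolding out_deg_def
  using card_mono[OF finite_cyclic_nbrs out_nbrs_subset_cyclic_nbrs[OF assms]]
    card_cyclic_nbrs_le_2 by (rule order_trans)

lemma out_deg_le_1_if_arc_in:
  assumes R: "R \<subseteq> reach_one_graph n A" and pv: "(p, v) \<in> R"
  shows "out_deg R v \<le> 1"
proof -
  have "p \<in> cyclic_nbrs n v" "A p < A v"
    using cyclic_nbrs_sym pv R by (auto simp: mem_reach_one_graph_iff)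
  then have "{w. (v, w) \<in> R} \<subseteq> cyclic_nbrs n v - {p}"
    using R by (auto simp: mem_reach_one_graph_iff)
  then have "out_deg R v \<le> card (cyclic_nbrs n v - {p})"
    unfolding out_deg_def by (simp add: card_mono finite_cyclic_nbrs)
  also have "\<dots> = card (cyclic_nbrs n v) - 1"
    using \<open>p \<in> cyclic_nbrs n v\<close> by (rule card_Diff_singleton)
  also have "\<dots> \<le> 1"
    using card_cyclic_nbrs_le_2[of n v] by linarith
  finally show ?thesis .
qed

lemma in_deg_le_1:
  assumes "single_valued (R\<inverse>)"
  shows "in_deg R v \<le> 1"
  unfolding in_deg_def
proof (cases "finite {u. (u, v) \<in> R}")
  case True
  then show "card {u. (u, v) \<in> R} \<le> 1"
    using assms by (auto simp: card_le_Suc0_iff_eq dest: single_valuedD)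
qed simp

lemma in_deg_eq_1: "single_valued (R\<inverse>) \<Longrightarrow> (p, v) \<in> R \<Longrightarrow> in_deg R v = 1"
proof -
  assume "single_valued (R\<inverse>)" "(p, v) \<in> R"
  then have "{u. (u, v) \<in> R} = {p}" by (auto dest: single_valuedD)
  then show ?thesis by (simp add: in_deg_def)
qed

lemma internal_has_parent_and_child:
  assumes "single_valued (R\<inverse>)" and "is_internal R C v"
  obtains p w where "(p, v) \<in> R" and "(v, w) \<in> R"
proof -
  obtain p where p: "(p, v) \<in> R"
    using assms(2) by (auto simp: is_internal_def is_root_def)
  have "\<exists>w. (v, w) \<in> R"
  proof (rule ccontr)
    assume "\<nexists>w. (v, w) \<in> R"
    then have "{u. (u, v) \<in> R \<or> (v, u) \<in> R} = {p}"
      using p assms(1) by (auto dest: single_valuedD)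
    then show False using assms(2) by (auto simp: is_internal_def is_leaf_def)
  qed
  then show thesis using p that by blast
qed

text \<open>The conjunct on the range is what makes the invariant inductive: a newly discovered
  vertex is unvisited, so it has no parent yet.\<close>
lemma dfs_state_tree_arcs:
  "dfs_state V E vis s T \<Longrightarrow> T \<subseteq> E \<and> Range T \<subseteq> vis \<and> single_valued (T\<inverse>)"
  by (induction rule: dfs_state.induct) (auto simp: single_valued_def)

lemma dfs_forest_arcs: "dfs_forest V E F \<Longrightarrow> F \<subseteq> E \<and> single_valued (F\<inverse>)"
  unfolding dfs_forest_def using dfs_state_tree_arcs by blast

theorem proposition2:
  fixes n :: nat and A :: "nat \<Rightarrow> real" and F :: "(nat \<times> nat) set" and C :: "nat set"
  assumes distinct: "inj_on A {1..n}"
    and forest: "dfs_forest {1..n} (reach_one_graph n A) F"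
    and comp: "C \<in> components {1..n} F"
  shows "(\<forall>r. is_root (comp_arcs F C) C r \<longrightarrow> out_deg (comp_arcs F C) r \<le> 2)
       \<and> (\<forall>v. is_leaf (comp_arcs F C) C v \<longrightarrow> in_deg (comp_arcs F C) v \<le> 1)
       \<and> (\<forall>v. is_internal (comp_arcs F C) C v \<longrightarrow>
              in_deg (comp_arcs F C) v = 1 \<and> out_deg (comp_arcs F C) v = 1)"
proof -
  let ?R = "comp_arcs F C"
  have "F \<subseteq> reach_one_graph n A" "single_valued (F\<inverse>)"
    using dfs_forest_arcs[OF forest] by auto
  then have arcs: "?R \<subseteq> reach_one_graph n A" and parent: "single_valued (?R\<inverse>)"
    by (auto simp: comp_arcs_def intro: single_valued_subset)
  have internal: "in_deg ?R v = 1 \<and> out_deg ?R v = 1" if v_internal: "is_internal ?R C v" for v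
  proof -
    obtain p w where pv: "(p, v) \<in> ?R" and vw: "(v, w) \<in> ?R"
      using internal_has_parent_and_child[OF parent v_internal] .
    have "finite {w. (v, w) \<in> ?R}"
      using out_nbrs_subset_cyclic_nbrs[OF arcs] finite_cyclic_nbrs by (rule finite_subset)
    then have "out_deg ?R v \<noteq> 0" using vw by (auto simp: out_deg_def)
    then show ?thesis
      using out_deg_le_1_if_arc_in[OF arcs pv] in_deg_eq_1[OF parent pv] by simp
  qed
  show ?thesis using out_deg_le_2[OF arcs] in_deg_le_1[OF parent] internal by blast
qed

end
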